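(* Let $A\in\mathbb R^{m\times n}$, $B\in\mathbb R^{d\times n}$ with $m\ge n$, $d\ge n$, and $B$ of full column rank $n$. Let $A=U\Gamma Y^T$, $B=V\Sigma Y^T$ be a reduced GSVD of $(A,B)$ as in the context, and let $1\le k<n$ with $\gamma_1/\sigma_1>\gamma_2/\sigma_2>\dots>\gamma_k/\sigma_k>\gamma_{k+1}/\sigma_{k+1}$. Define $s_A=\mathrm{DEIM}(U_k)$, $s_B=\mathrm{DEIM}(V_k)$, $p=\mathrm{DEIM}(Y_k)$, where $U_k,V_k,Y_k$ are the first $k$ columns of $U,V,Y$. (i) Let $G=AB^{+}$ (which equals $AB^{-1}$ when $B$ is square). Then $\sigma_i>0$ for all $i$, $G=U(\Gamma\Sigma^{-1})V^T$ is a (reduced) singular value decomposition of $G$, and if $W_k$ and $Z_k$ denote any matrices of $k$ dominant left and right singular vectors of $G$, then $\mathrm{DEIM}(W_k)=s_A$ and $\mathrm{DEIM}(Z_k)=s_B$. (ii) If $d=n$ and $B=I_n$, then, with $W_k$ and $Z_k$ any matrices of $k$ dominant left and right singular vectors of $A$, $\mathrm{DEIM}(W_k)=s_A$ and $\mathrm{DEIM}(Z_k)=p$; consequently the factors $C=AP$ and $R=S_A^TA$ (with $P=I_n(:,p)$, $S_A=I_m(:,s_A)$) of the GCUR of $A$ coincide with those of the DEIM-CUR decomposition of $A$.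
   Context: Reduced GSVD: $U\in\mathbb R^{m\times n}$, $V\in\mathbb R^{d\times n}$ have orthonormal columns, $Y\in\mathbb R^{n\times n}$ is nonsingular, $\Gamma=\mathrm{diag}(\gamma_i)$, $\Sigma=\mathrm{diag}(\sigma_i)$ with $\gamma_i,\sigma_i\in[0,1]$, $\gamma_i^2+\sigma_i^2=1$, ordered so that $\gamma_i/\sigma_i$ is nonincreasing, and $A=U\Gamma Y^T$, $B=V\Sigma Y^T$. $B^+$ is the Moore–Penrose pseudoinverse. DEIM index selection: for a matrix $X=[\mathbf x_1,\dots,\mathbf x_k]\in\mathbb R^{N\times k}$ with linearly independent columns, $\mathrm{DEIM}(X)=(s_1,\dots,s_k)$ is defined by: $s_1$ is the smallest index $i$ maximizing $|\mathbf x_1(i)|$; for $j=2,\dots,k$, with $X_{j-1}=[\mathbf x_1,\dots,\mathbf x_{j-1}]$ and $S_{j-1}=I_N(:,(s_1,\dots,s_{j-1}))$, set $\mathbf r_j=\mathbf x_j-X_{j-1}(S_{j-1}^TX_{j-1})^{-1}S_{j-1}^T\mathbf x_j$ and let $s_j$ be the smallest index $i$ maximizing $|\mathbf r_j(i)|$. (Here $I_N(:,s)$ is the matrix of columns of the identity indexed by $s$.) The DEIM-CUR decomposition of a matrix $A$ uses row indices $\mathrm{DEIM}(W_k)$ and column indices $\mathrm{DEIM}(Z_k)$ for the dominant left/right singular vectors $W_k,Z_k$; the GCUR of $(A,B)$ uses column indices $p$ for both $A$ and $B$, row indices $s_A$ for $A$ and $s_B$ for $B$. *)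

theory Defs
  imports "Jordan_Normal_Form.Gauss_Jordan_Elimination" "Jordan_Normal_Form.DL_Rank"
begin

(* Matrices are Jordan_Normal_Form matrices ('a mat); indices are 0-based. *)

definition first_cols :: "real mat \<Rightarrow> nat \<Rightarrow> real mat" where
  "first_cols X k = mat (dim_row X) k (\<lambda>(i,j). X $$ (i,j))"

definition sel_mat :: "nat \<Rightarrow> nat list \<Rightarrow> real mat" where
  "sel_mat N s = mat N (length s) (\<lambda>(i,j). if i = s ! j then 1 else 0)"

definition inv_mat :: "real mat \<Rightarrow> real mat" where
  "inv_mat M = (case mat_inverse M of Some Mi \<Rightarrow> Mi | None \<Rightarrow> 0\<^sub>m (dim_col M) (dim_row M))"

definition first_argmax_abs :: "real vec \<Rightarrow> nat" where
  "first_argmax_abs r = (LEAST i. i < dim_vec r \<and> (\<forall>j < dim_vec r. \<bar>r $ j\<bar> \<le> \<bar>r $ i\<bar>))"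

fun deim_aux :: "real mat \<Rightarrow> nat \<Rightarrow> nat list" where
  "deim_aux X 0 = []"
| "deim_aux X (Suc j) =
     (let s = deim_aux X j;
          Xj = first_cols X j;
          S = sel_mat (dim_row X) s;
          x = col X j;
          r = x - Xj *\<^sub>v (inv_mat (S\<^sup>T * Xj) *\<^sub>v (S\<^sup>T *\<^sub>v x))
      in s @ [first_argmax_abs r])"

definition DEIM :: "real mat \<Rightarrow> nat list" where
  "DEIM X = deim_aux X (dim_col X)"

definition diag_mat :: "nat \<Rightarrow> (nat \<Rightarrow> real) \<Rightarrow> real mat" where
  "diag_mat n f = mat n n (\<lambda>(i,j). if i = j then f i else 0)"

definition pinv :: "real mat \<Rightarrow> real mat" where
  "pinv M = (THE X. X \<in> carrier_mat (dim_col M) (dim_row M) \<and>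
                    M * X * M = M \<and> X * M * X = X \<and>
                    (M * X)\<^sup>T = M * X \<and> (X * M)\<^sup>T = X * M)"

definition is_svd :: "real mat \<Rightarrow> real mat \<Rightarrow> real mat \<Rightarrow> real mat \<Rightarrow> bool" where
  "is_svd G W S Z \<longleftrightarrow> (\<exists>r.
      W \<in> carrier_mat (dim_row G) r \<and> Z \<in> carrier_mat (dim_col G) r \<and>
      S \<in> carrier_mat r r \<and>
      W\<^sup>T * W = 1\<^sub>m r \<and> Z\<^sup>T * Z = 1\<^sub>m r \<and>
      (\<forall>i<r. \<forall>j<r. i \<noteq> j \<longrightarrow> S $$ (i,j) = 0) \<and>
      (\<forall>i<r. 0 \<le> S $$ (i,i)) \<and>
      (\<forall>i j. i \<le> j \<and> j < r \<longrightarrow> S $$ (j,j) \<le> S $$ (i,i)) \<and>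
      G = W * S * Z\<^sup>T)"

definition dominant_sing_vecs :: "real mat \<Rightarrow> nat \<Rightarrow> real mat \<Rightarrow> real mat \<Rightarrow> bool" where
  "dominant_sing_vecs G k Wk Zk \<longleftrightarrow> (\<exists>W S Z. is_svd G W S Z \<and> k \<le> dim_col W \<and>
      Wk = first_cols W k \<and> Zk = first_cols Z k)"

definition is_reduced_gsvd ::
  "real mat \<Rightarrow> real mat \<Rightarrow> real mat \<Rightarrow> real mat \<Rightarrow> real mat \<Rightarrow> (nat \<Rightarrow> real) \<Rightarrow> (nat \<Rightarrow> real) \<Rightarrow> bool" where
  "is_reduced_gsvd A B U V Y gam sig \<longleftrightarrow> (
     let m = dim_row A; n = dim_col A; d = dim_row B in
     B \<in> carrier_mat d n \<and>
     U \<in> carrier_mat m n \<and> V \<in> carrier_mat d n \<and> Y \<in> carrier_mat n n \<and>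
     U\<^sup>T * U = 1\<^sub>m n \<and> V\<^sup>T * V = 1\<^sub>m n \<and> invertible_mat Y \<and>
     (\<forall>i<n. 0 \<le> gam i \<and> gam i \<le> 1 \<and> 0 \<le> sig i \<and> sig i \<le> 1 \<and>
            (gam i)\<^sup>2 + (sig i)\<^sup>2 = 1) \<and>
     (\<comment> \<open>gam i / sig i nonincreasing (as extended reals, gam/0 = infinity)\<close>
      \<forall>i. i + 1 < n \<longrightarrow> gam (i+1) * sig i \<le> gam i * sig (i+1)) \<and>
     A = U * diag_mat n gam * Y\<^sup>T \<and> B = V * diag_mat n sig * Y\<^sup>T)"

end

theory Submission
  imports Defs
begin

(* Since B has full column rank, every sigma_i is positive and pinv B = Y^-T Sigma^-1 V^T, so
   G = A pinv B = U (Gamma Sigma^-1) V^T is a singular value decomposition of G.  Any other SVD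
   G = W S Z^T is tied to it by the coupling matrix M = V^T Z: from both factorizations,
   (Gamma Sigma^-1) M = (U^T W) S and (Gamma Sigma^-1) (U^T W) = M S, so M_ij can be nonzero only
   where the two singular values agree, while the rows and columns of M belonging to nonzero
   singular values are unit vectors, the columns even orthonormal.  The strict gap after the k-th
   quotient gamma_i / sigma_i then forces the leading k columns of W and Z to be those of U and V
   up to sign.  DEIM only looks at the position of the largest entry of each residual, and
   rescaling a column of its input only rescales the corresponding residual, which gives (i);
   when B = I, Y = V Sigma^-1 is such a rescaling of V, which gives (ii). *)

lemma assoc_mult_mat_dims:
  "dim_col (A :: 'a :: semiring_0 mat) = dim_row B \<Longrightarrow> dim_col B = dim_row C \<Longrightarrow> A * B * C = A * (B * C)"
  by (rule assoc_mult_mat[of A "dim_row A" "dim_col A" B "dim_col B" C "dim_col C"]) auto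

lemma transpose_mult_dims:
  "dim_col (A :: 'a :: comm_semiring_0 mat) = dim_row B \<Longrightarrow> (A * B)\<^sup>T = B\<^sup>T * A\<^sup>T"
  by (rule transpose_mult[of A "dim_row A" "dim_col A" B "dim_col B"]) auto

lemma mult_left_inverse_cancel:
  assumes PQ: "(P :: 'a :: semiring_1 mat) * Q = 1\<^sub>m n" and "dim_col P = dim_row Q" and "dim_row X = n"
  shows "P * (Q * X) = X"
proof -
  have "dim_col Q = n" using arg_cong[OF PQ, of dim_col] by simp
  then show ?thesis using assms by (simp flip: assoc_mult_mat_dims)
qed

lemma index_mult_mat_sum:
  "i < dim_row A \<Longrightarrow> j < dim_col B \<Longrightarrow> dim_col A = dim_row B \<Longrightarrow>
   (A * B) $$ (i,j) = (\<Sum>l<dim_row B. A $$ (i,l) * B $$ (l,j))"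
  by (simp add: scalar_prod_def atLeast0LessThan)

lemma sum_eq_single:
  assumes "i < (n::nat)" and "\<And>l. l < n \<Longrightarrow> l \<noteq> i \<Longrightarrow> g l = (0::'a::comm_monoid_add)"
  shows "(\<Sum>l<n. g l) = g i"
  using assms by (subst sum.remove[of _ i]) (auto intro!: sum.neutral)

lemma diag_mat_carrier [simp]: "diag_mat n f \<in> carrier_mat n n"
  by (simp add: diag_mat_def)

lemma dim_diag_mat [simp]: "dim_row (diag_mat n f) = n" "dim_col (diag_mat n f) = n"
  by (simp_all add: diag_mat_def)

lemma index_diag_mat: "i < n \<Longrightarrow> j < n \<Longrightarrow> diag_mat n f $$ (i,j) = (if i = j then f i else 0)"
  by (simp add: diag_mat_def)

lemma transpose_diag_mat [simp]: "(diag_mat n f)\<^sup>T = diag_mat n f"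
  by (rule eq_matI) (auto simp: index_diag_mat)

lemma index_mult_diag_mat:
  assumes "A \<in> carrier_mat r n" "i < r" "j < n"
  shows "(A * diag_mat n f) $$ (i,j) = A $$ (i,j) * f j"
  using assms by (subst index_mult_mat_sum) (auto simp: index_diag_mat sum_eq_single[of j])

lemma index_diag_mat_mult:
  assumes "A \<in> carrier_mat n r" "i < n" "j < r"
  shows "(diag_mat n f * A) $$ (i,j) = f i * A $$ (i,j)"
  using assms by (subst index_mult_mat_sum) (auto simp: index_diag_mat sum_eq_single[of i])

lemma diag_mat_mult_diag_mat: "diag_mat n f * diag_mat n g = diag_mat n (\<lambda>i. f i * g i)"
  by (rule eq_matI) (simp_all add: index_mult_diag_mat[of "diag_mat n f" n n] index_diag_mat del: index_mult_mat(1))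

lemma diag_mat_mult_inverse:
  assumes "\<forall>i<n. f i \<noteq> 0"
  shows "diag_mat n f * diag_mat n (\<lambda>i. 1 / f i) = 1\<^sub>m n"
    and "diag_mat n (\<lambda>i. 1 / f i) * diag_mat n f = 1\<^sub>m n"
  using assms by (auto intro!: eq_matI simp: diag_mat_mult_diag_mat index_diag_mat)

lemma col_mult_diag_mat:
  assumes "X \<in> carrier_mat N K" and "j < K"
  shows "col (X * diag_mat K c) j = c j \<cdot>\<^sub>v col X j"
  using assms by (auto intro!: eq_vecI simp: index_mult_diag_mat[OF assms(1)] simp del: index_mult_mat(1))

lemma first_cols_carrier [simp]: "first_cols X k \<in> carrier_mat (dim_row X) k"
  by (simp add: first_cols_def)

lemma dim_first_cols [simp]: "dim_row (first_cols X k) = dim_row X" "dim_col (first_cols X k) = k"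
  by (simp_all add: first_cols_def)

lemma first_cols_eq_mult_diag_mat:
  assumes X: "X \<in> carrier_mat N K" and W: "W \<in> carrier_mat N K'" and "j \<le> K" "j \<le> K'"
    and cols: "\<And>l. l < j \<Longrightarrow> col W l = c l \<cdot>\<^sub>v col X l"
  shows "first_cols W j = first_cols X j * diag_mat j c"
proof (rule eq_matI)
  fix a l assume "a < dim_row (first_cols X j * diag_mat j c)" "l < dim_col (first_cols X j * diag_mat j c)"
  then have a: "a < N" and l: "l < j" using X by auto
  have "W $$ (a,l) = col W l $ a"
    using a l assms(2-4) by auto
  also have "\<dots> = c l * col X l $ a"
    using cols[OF l] a X by simp
  also have "\<dots> = c l * X $$ (a,l)"
    using a l assms(1,3) by auto
  finally have "W $$ (a,l) = c l * X $$ (a,l)" .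
  then show "first_cols W j $$ (a,l) = (first_cols X j * diag_mat j c) $$ (a,l)"
    using a l assms(1-4) by (simp add: index_mult_diag_mat[OF first_cols_carrier] del: index_mult_mat(1))
      (simp add: first_cols_def)
qed (use X W in auto)

lemma first_cols_mult_diag_mat:
  assumes "X \<in> carrier_mat N K" and "j \<le> K"
  shows "first_cols (X * diag_mat K c) j = first_cols X j * diag_mat j c"
  using assms by (intro first_cols_eq_mult_diag_mat[of X N K _ K]) (auto simp: col_mult_diag_mat)

lemma inv_mat_carrier: "M \<in> carrier_mat n n \<Longrightarrow> inv_mat M \<in> carrier_mat n n"
  by (cases "mat_inverse M") (auto simp: inv_mat_def dest: mat_inverse(2))

lemma mult_inv_mat:
  assumes M: "M \<in> carrier_mat n n" and "det M \<noteq> 0"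
  shows "M * inv_mat M = 1\<^sub>m n"
proof -
  obtain Mi where "mat_inverse M = Some Mi"
    using mat_inverse(1)[OF M] det_non_zero_imp_unit[OF M assms(2)] by (metis option.exhaust)
  then show ?thesis using mat_inverse(2)[OF M] by (simp add: inv_mat_def)
qed

lemma inv_mat_eqI:
  assumes M: "M \<in> carrier_mat n n" and X: "X \<in> carrier_mat n n" and MX: "M * X = 1\<^sub>m n"
  shows "inv_mat M = X"
proof -
  have "det M * det X = 1" using arg_cong[OF MX, of det] by (simp add: det_mult[OF M X])
  then have MMi: "M * inv_mat M = 1\<^sub>m n" using mult_inv_mat[OF M] by force
  have Mi: "inv_mat M \<in> carrier_mat n n" using inv_mat_carrier[OF M] .
  have "inv_mat M * M = 1\<^sub>m n" by (rule mat_mult_left_right_inverse[OF M Mi MMi])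
  then have "inv_mat M = inv_mat M * (M * X)" using MX Mi by simp
  also have "\<dots> = X" by (rule mult_left_inverse_cancel[OF \<open>inv_mat M * M = 1\<^sub>m n\<close>]) (use M Mi X in auto)
  finally show ?thesis .
qed

lemma inv_mat_det_zero:
  assumes M: "M \<in> carrier_mat n n" and "det M = 0"
  shows "inv_mat M = 0\<^sub>m n n"
proof (cases "mat_inverse M")
  case (Some Mi)
  then have "M * Mi = 1\<^sub>m n" "Mi \<in> carrier_mat n n" using mat_inverse(2)[OF M] by auto
  then have "det M * det Mi = 1" using arg_cong[of _ _ det] det_mult[OF M] by force
  with assms show ?thesis by simp
qed (use M in \<open>simp add: inv_mat_def\<close>)

lemma inv_mat_mult_diag_mat:
  assumes M: "M \<in> carrier_mat n n" and c: "\<forall>i<n. c i \<noteq> 0"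
  shows "inv_mat (M * diag_mat n c) = diag_mat n (\<lambda>i. 1 / c i) * inv_mat M"
proof (cases "det M = 0")
  case True
  then have "det (M * diag_mat n c) = 0" by (simp add: det_mult[OF M])
  then show ?thesis using M True by (simp add: inv_mat_det_zero)
next
  case False
  show ?thesis
  proof (rule inv_mat_eqI)
    have "M * diag_mat n c * (diag_mat n (\<lambda>i. 1 / c i) * inv_mat M)
        = M * (diag_mat n c * diag_mat n (\<lambda>i. 1 / c i)) * inv_mat M"
      using M inv_mat_carrier[OF M] by (simp add: assoc_mult_mat_dims)
    also have "\<dots> = 1\<^sub>m n" using M by (simp add: diag_mat_mult_inverse(1)[OF c] mult_inv_mat[OF M False])
    finally show "M * diag_mat n c * (diag_mat n (\<lambda>i. 1 / c i) * inv_mat M) = 1\<^sub>m n" .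
  qed (use M inv_mat_carrier[OF M] in auto)
qed

lemma first_argmax_abs_smult:
  assumes "(c :: real) \<noteq> 0"
  shows "first_argmax_abs (c \<cdot>\<^sub>v r) = first_argmax_abs r"
  unfolding first_argmax_abs_def
  by (rule arg_cong[where f = Least], rule ext) (use assms in \<open>auto simp: abs_mult\<close>)

lemma length_deim_aux [simp]: "length (deim_aux X j) = j"
  by (induction j) (simp_all add: Let_def)

lemma deim_aux_mult_diag_mat:
  assumes X: "X \<in> carrier_mat N K" and c: "\<forall>j<K. c j \<noteq> 0"
  shows "j \<le> K \<Longrightarrow> deim_aux (X * diag_mat K c) j = deim_aux X j"
proof (induction j)
  case (Suc j)
  then have j: "j < K" by simp
  define S where "S = sel_mat N (deim_aux X j)"
  define Xj where "Xj = first_cols X j"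
  define P where "P = inv_mat (S\<^sup>T * Xj)"
  define x where "x = col X j"
  have SXx: "S \<in> carrier_mat N j" "Xj \<in> carrier_mat N j" "x \<in> carrier_vec N"
    using X j by (auto simp: S_def Xj_def x_def sel_mat_def)
  then have "P \<in> carrier_mat j j" unfolding P_def by (intro inv_mat_carrier) auto
  note dims = SXx this
  have cj: "\<forall>i<j. c i \<noteq> 0" using c j by simp
  txt \<open>The oblique projector \<open>X\<^sub>j (S\<^sup>T X\<^sub>j)\<^sup>-\<^sup>1 S\<^sup>T\<close> does not see the column scaling, so the
    new residual is \<open>c\<^sub>j\<close> times the old one.\<close>
  have proj: "Xj * diag_mat j c * inv_mat (S\<^sup>T * (Xj * diag_mat j c)) = Xj * P"
  proof -
    have "inv_mat (S\<^sup>T * (Xj * diag_mat j c)) = diag_mat j (\<lambda>i. 1 / c i) * P"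
      using inv_mat_mult_diag_mat[OF _ cj, of "S\<^sup>T * Xj"] dims by (simp add: assoc_mult_mat_dims P_def)
    then show ?thesis
      using dims by (simp add: assoc_mult_mat_dims mult_left_inverse_cancel diag_mat_mult_inverse(1)[OF cj])
  qed
  have Q: "inv_mat (S\<^sup>T * (Xj * diag_mat j c)) \<in> carrier_mat j j"
    using dims by (intro inv_mat_carrier) auto
  have "col (X * diag_mat K c) j - first_cols (X * diag_mat K c) j *\<^sub>v
          (inv_mat (S\<^sup>T * first_cols (X * diag_mat K c) j) *\<^sub>v (S\<^sup>T *\<^sub>v col (X * diag_mat K c) j))
      = c j \<cdot>\<^sub>v x - (Xj * diag_mat j c * inv_mat (S\<^sup>T * (Xj * diag_mat j c))) *\<^sub>v (S\<^sup>T *\<^sub>v (c j \<cdot>\<^sub>v x))"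
    using dims X j Q
    by (subst assoc_mult_mat_vec[of _ N j]) (auto simp: col_mult_diag_mat first_cols_mult_diag_mat Xj_def x_def)
  also have "\<dots> = c j \<cdot>\<^sub>v x - (Xj * P) *\<^sub>v (S\<^sup>T *\<^sub>v (c j \<cdot>\<^sub>v x))"
    by (simp only: proj)
  also have "\<dots> = c j \<cdot>\<^sub>v (x - Xj *\<^sub>v (P *\<^sub>v (S\<^sup>T *\<^sub>v x)))"
    using dims by (auto intro!: eq_vecI simp: mult_mat_vec algebra_simps)
  finally show ?case
    using Suc c j X by (simp add: Let_def first_argmax_abs_smult S_def Xj_def P_def x_def)
qed simp

lemma DEIM_mult_diag_mat:
  assumes "X \<in> carrier_mat N K" and "\<forall>j<K. c j \<noteq> 0"
  shows "DEIM (X * diag_mat K c) = DEIM X"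
  using deim_aux_mult_diag_mat[OF assms, of K] assms(1) by (simp add: DEIM_def)

lemma antitone_from_adjacent:
  fixes f :: "nat \<Rightarrow> 'a :: order"
  assumes adj: "\<And>i. i + 1 < n \<Longrightarrow> f (i+1) \<le> f i"
  shows "\<forall>i j. i \<le> j \<and> j < n \<longrightarrow> f j \<le> f i"
proof (intro allI impI, elim conjE)
  fix i j assume "i \<le> j" "j < n"
  then show "f j \<le> f i"
  proof (induction j rule: dec_induct)
    case (step j)
    then show ?case using adj[of j] by (simp add: order_trans)
  qed simp
qed

lemma antitone_gap_separates:
  fixes f :: "nat \<Rightarrow> real"
  assumes mono: "\<forall>i j. i \<le> j \<and> j < n \<longrightarrow> f j \<le> f i" and gap: "\<forall>i<k. f (i+1) < f i"
    and "i < k" "i < j" "j < n"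
  shows "f j < f i"
  using mono[rule_format, of "i+1" j] gap[rule_format, of i] assms(3-) by simp

text \<open>Here \<open>M\<close> plays the coupling matrix of two SVDs with singular values \<open>f\<close> and \<open>s\<close>.\<close>

lemma diagonal_matching_columns:
  fixes f s :: "nat \<Rightarrow> real" and M :: "real mat"
  assumes f0: "\<forall>i<n. 0 \<le> f i" and fmono: "\<forall>i j. i \<le> j \<and> j < n \<longrightarrow> f j \<le> f i"
    and fgap: "\<forall>i<k. f (i+1) < f i" and kn: "k < n" and kr: "k \<le> r"
    and smono: "\<forall>i j. i \<le> j \<and> j < r \<longrightarrow> s j \<le> s i"
    and supp: "\<And>i j. i < n \<Longrightarrow> j < r \<Longrightarrow> M $$ (i,j) \<noteq> 0 \<Longrightarrow> s j = f i"
    and rows: "\<And>i. i < n \<Longrightarrow> f i \<noteq> 0 \<Longrightarrow> (\<Sum>l<r. M $$ (i,l) * M $$ (i,l)) = 1"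
    and cols: "\<And>j l. j < r \<Longrightarrow> l < r \<Longrightarrow> s l \<noteq> 0 \<Longrightarrow>
                 (\<Sum>a<n. M $$ (a,j) * M $$ (a,l)) = (if j = l then 1 else 0)"
  shows "i < k \<Longrightarrow> s i = f i \<and> (\<forall>a<n. M $$ (a,i) \<noteq> 0 \<longrightarrow> a = i) \<and> \<bar>M $$ (i,i)\<bar> = 1"
proof (induction i rule: less_induct)
  case (less i)
  note strict = antitone_gap_separates[OF fmono fgap]
  have fi: "0 < f i" using strict[of i k] less.prems f0 kn by fastforce
  have f_inj: "j = i" if "j < n" "f j = f i" for j
  proof (rule ccontr)
    assume "j \<noteq> i"
    then consider "i < j" | "j < i" by linarith
    then show False
    proof cases
      case 1 then show False using strict[of i j] that less.prems kn by simp
    next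
      case 2 then show False using strict[of j i] that less.prems kn by simp
    qed
  qed
  have "(\<Sum>l<r. M $$ (i,l) * M $$ (i,l)) \<noteq> 0" using rows[of i] less.prems kn fi by simp
  then obtain l where l: "l < r" "M $$ (i,l) \<noteq> 0" by (rule sum.not_neutral_contains_not_neutral) simp
  have "\<not> l < i"
  proof
    assume "l < i"
    then have "f l = f i" using less.IH[of l] supp[of i l] l less.prems kn by simp
    with \<open>l < i\<close> f_inj[of l] less.prems kn show False by simp
  qed
  then have si_ge: "f i \<le> s i" using smono[rule_format, of i l] supp[of i l] l less.prems kn by simp
  have si: "s i \<noteq> 0" using si_ge fi by simp
  have column: "M $$ (a,i) \<noteq> 0 \<Longrightarrow> a = i" if "a < n" for a
  proof (rule ccontr)
    assume Mai: "M $$ (a,i) \<noteq> 0" and "a \<noteq> i"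
    then have fa: "f a = s i" using supp[of a i] that less.prems kr by simp
    show False
    proof (cases "a < i")
      case True
      then have IHa: "\<forall>b<n. M $$ (b,a) \<noteq> 0 \<longrightarrow> b = a" "\<bar>M $$ (a,a)\<bar> = 1"
        using less.IH[of a] less.prems by auto
      have "(\<Sum>b<n. M $$ (b,a) * M $$ (b,i)) = M $$ (a,a) * M $$ (a,i)"
        using IHa(1) that by (intro sum_eq_single) auto
      moreover have "(\<Sum>b<n. M $$ (b,a) * M $$ (b,i)) = 0"
        using cols[of a i] si True less.prems kr by simp
      ultimately show False using IHa(2) Mai by auto
    next
      case False
      then show False using strict[of i a] si_ge fa \<open>a \<noteq> i\<close> that less.prems by simp
    qed
  qed
  have "(\<Sum>a<n. M $$ (a,i) * M $$ (a,i)) \<noteq> 0" using cols[of i i] si less.prems kr by simp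
  then obtain a where a: "a < n" "M $$ (a,i) \<noteq> 0" by (rule sum.not_neutral_contains_not_neutral) simp
  have "s i = f i" using column[OF a] a supp[of a i] less.prems kr by simp
  moreover have "(\<Sum>b<n. M $$ (b,i) * M $$ (b,i)) = M $$ (i,i) * M $$ (i,i)"
    using column less.prems kn by (intro sum_eq_single) auto
  then have "M $$ (i,i) * M $$ (i,i) = 1" using cols[of i i] si less.prems kr by simp
  then have "\<bar>M $$ (i,i)\<bar> = 1" using abs_square_eq_1 by (metis power2_eq_square)
  ultimately show ?case using column by blast
qed

lemma mult_mat_vec_unit_vec:
  assumes "(A :: 'a :: semiring_1 mat) \<in> carrier_mat m n" and "i < n"
  shows "A *\<^sub>v unit_vec n i = col A i"
  using assms by (intro eq_vecI) (auto simp: row_def)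

lemma col_eq_smult_unit_vec:
  assumes "(A :: 'a :: semiring_1 mat) \<in> carrier_mat n r" and "i < r" and "j < n"
    and "\<And>a. a < n \<Longrightarrow> a \<noteq> j \<Longrightarrow> A $$ (a,i) = 0"
  shows "col A i = A $$ (j,i) \<cdot>\<^sub>v unit_vec n j"
  using assms by (intro eq_vecI) auto

lemma smult_vec_cancel:
  assumes "(c :: real) \<noteq> 0" and "c \<cdot>\<^sub>v v = c \<cdot>\<^sub>v w"
  shows "v = w"
  using arg_cong[OF assms(2), of "\<lambda>x. (1 / c) \<cdot>\<^sub>v x"] assms(1) by (simp add: smult_smult_assoc)

locale orthonormal_factorizations =
  fixes U V W Z :: "real mat" and f s :: "nat \<Rightarrow> real" and p q n r :: nat
  assumes U: "U \<in> carrier_mat p n" and V: "V \<in> carrier_mat q n"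
    and W: "W \<in> carrier_mat p r" and Z: "Z \<in> carrier_mat q r"
    and UU: "U\<^sup>T * U = 1\<^sub>m n" and VV: "V\<^sup>T * V = 1\<^sub>m n"
    and WW: "W\<^sup>T * W = 1\<^sub>m r" and ZZ: "Z\<^sup>T * Z = 1\<^sub>m r"
    and factorizations_eq: "U * diag_mat n f * V\<^sup>T = W * diag_mat r s * Z\<^sup>T"
begin

lemma swap: "orthonormal_factorizations W Z U V s f p q r n"
  using U V W Z UU VV WW ZZ factorizations_eq by unfold_locales auto

lemma transpose: "orthonormal_factorizations V U Z W f s q p n r"
proof unfold_locales
  have "(U * diag_mat n f * V\<^sup>T)\<^sup>T = V * diag_mat n f * U\<^sup>T"
    "(W * diag_mat r s * Z\<^sup>T)\<^sup>T = Z * diag_mat r s * W\<^sup>T"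
    using U V W Z by (simp_all add: transpose_mult_dims assoc_mult_mat_dims)
  then show "V * diag_mat n f * U\<^sup>T = Z * diag_mat r s * W\<^sup>T" using factorizations_eq by metis
qed (use U V W Z UU VV WW ZZ in auto)

lemma mult_coupling: "U * (diag_mat n f * (V\<^sup>T * Z)) = W * diag_mat r s"
proof -
  have "U * (diag_mat n f * (V\<^sup>T * Z)) = U * diag_mat n f * V\<^sup>T * Z"
    using U V Z by (simp add: assoc_mult_mat_dims)
  also have "\<dots> = W * diag_mat r s * (Z\<^sup>T * Z)"
    using factorizations_eq W Z by (simp add: assoc_mult_mat_dims)
  finally show ?thesis using W ZZ by simp
qed

lemma diag_mult_coupling: "diag_mat n f * (V\<^sup>T * Z) = U\<^sup>T * W * diag_mat r s"
proof -
  have "diag_mat n f * (V\<^sup>T * Z) = U\<^sup>T * (U * (diag_mat n f * (V\<^sup>T * Z)))"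
    using U V Z by (simp add: mult_left_inverse_cancel[OF UU])
  also have "\<dots> = U\<^sup>T * W * diag_mat r s"
    using mult_coupling U W by (simp add: assoc_mult_mat_dims)
  finally show ?thesis .
qed

lemma coupling_gram: "(V\<^sup>T * Z)\<^sup>T * (V\<^sup>T * Z) * diag_mat r s = diag_mat r s"
proof -
  have "Z * diag_mat r s = V * (diag_mat n f * (U\<^sup>T * W))"
    using orthonormal_factorizations.mult_coupling[OF transpose] by simp
  also have "\<dots> = V * (V\<^sup>T * Z * diag_mat r s)"
    using orthonormal_factorizations.diag_mult_coupling[OF transpose] by simp
  finally have ZS: "Z * diag_mat r s = V * (V\<^sup>T * Z * diag_mat r s)" .
  have "(V\<^sup>T * Z)\<^sup>T * (V\<^sup>T * Z) * diag_mat r s = Z\<^sup>T * (V * (V\<^sup>T * Z * diag_mat r s))"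
    using V Z by (simp add: transpose_mult_dims assoc_mult_mat_dims)
  also have "\<dots> = diag_mat r s"
    using Z by (simp flip: ZS add: mult_left_inverse_cancel[OF ZZ])
  finally show ?thesis .
qed

lemma coupling_carrier: "V\<^sup>T * Z \<in> carrier_mat n r"
  using V Z by simp

lemma coupling_support:
  assumes f0: "\<forall>i<n. 0 \<le> f i" and s0: "\<forall>j<r. 0 \<le> s j"
    and ij: "i < n" "j < r" and Mij: "(V\<^sup>T * Z) $$ (i,j) \<noteq> 0"
  shows "s j = f i"
proof -
  define M where "M = V\<^sup>T * Z"
  define N where "N = U\<^sup>T * W"
  have Nc: "N \<in> carrier_mat n r" using U W by (simp add: N_def)
  have "(diag_mat n f * M) $$ (i,j) = f i * M $$ (i,j)" "(N * diag_mat r s) $$ (i,j) = N $$ (i,j) * s j"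
    "(diag_mat n f * N) $$ (i,j) = f i * N $$ (i,j)" "(M * diag_mat r s) $$ (i,j) = M $$ (i,j) * s j"
    using coupling_carrier Nc ij unfolding M_def by (simp_all only: index_diag_mat_mult index_mult_diag_mat)
  then have fM: "f i * M $$ (i,j) = N $$ (i,j) * s j" and fN: "f i * N $$ (i,j) = M $$ (i,j) * s j"
    using diag_mult_coupling orthonormal_factorizations.diag_mult_coupling[OF transpose]
    unfolding M_def N_def by metis+
  have "(f i)\<^sup>2 * M $$ (i,j) = f i * (N $$ (i,j) * s j)"
    by (simp only: power2_eq_square mult.assoc fM)
  also have "\<dots> = (s j)\<^sup>2 * M $$ (i,j)"
    by (simp only: power2_eq_square mult.assoc[symmetric] fN) (simp only: ac_simps)
  finally have "(f i)\<^sup>2 = (s j)\<^sup>2" using Mij by (simp add: M_def)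
  then show ?thesis using f0 s0 ij by (simp add: power2_eq_iff_nonneg)
qed

lemma coupling_orthonormal_cols:
  assumes jl: "j < r" "l < r" and sl: "s l \<noteq> 0"
  shows "(\<Sum>a<n. (V\<^sup>T * Z) $$ (a,j) * (V\<^sup>T * Z) $$ (a,l)) = (if j = l then 1 else 0)"
proof -
  let ?M = "V\<^sup>T * Z"
  have MtM: "?M\<^sup>T * ?M \<in> carrier_mat r r" using coupling_carrier by simp
  have "(?M\<^sup>T * ?M) $$ (j,l) * s l = (if j = l then s l else 0)"
    using arg_cong[OF coupling_gram, of "\<lambda>A. A $$ (j,l)"]
    unfolding index_mult_diag_mat[OF MtM jl] index_diag_mat[OF jl] by simp
  moreover have "(?M\<^sup>T * ?M) $$ (j,l) = (\<Sum>a<n. ?M $$ (a,j) * ?M $$ (a,l))"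
    using coupling_carrier V jl by (subst index_mult_mat_sum) auto
  ultimately show ?thesis using sl by (auto split: if_splits)
qed

lemma coupling_unit_rows:
  assumes i: "i < n" and fi: "f i \<noteq> 0"
  shows "(\<Sum>l<r. (V\<^sup>T * Z) $$ (i,l) * (V\<^sup>T * Z) $$ (i,l)) = 1"
proof -
  have "Z\<^sup>T * V = (V\<^sup>T * Z)\<^sup>T" using V Z by (simp add: transpose_mult_dims)
  then have "(Z\<^sup>T * V) $$ (l,i) = (V\<^sup>T * Z) $$ (i,l)" if "l < r" for l
    using carrier_matD[OF coupling_carrier] i that by simp
  then show ?thesis
    using orthonormal_factorizations.coupling_orthonormal_cols[OF swap i i fi] by simp
qed

lemma columns_from_coupling:
  assumes i: "i < n" "i < r" and si: "s i = f i" and fi: "f i \<noteq> 0"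
    and Mcol: "\<And>a. a < n \<Longrightarrow> a \<noteq> i \<Longrightarrow> (V\<^sup>T * Z) $$ (a,i) = 0"
  shows "col W i = (V\<^sup>T * Z) $$ (i,i) \<cdot>\<^sub>v col U i \<and> col Z i = (V\<^sup>T * Z) $$ (i,i) \<cdot>\<^sub>v col V i"
proof -
  let ?M = "V\<^sup>T * Z" and ?c = "(V\<^sup>T * Z) $$ (i,i)"
  have DMc: "diag_mat n f * ?M \<in> carrier_mat n r" and MDc: "?M * diag_mat r s \<in> carrier_mat n r"
    using mult_carrier_mat[OF diag_mat_carrier coupling_carrier] mult_carrier_mat[OF coupling_carrier diag_mat_carrier]
    by auto
  have "col (diag_mat n f * ?M) i = (diag_mat n f * ?M) $$ (i,i) \<cdot>\<^sub>v unit_vec n i"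
    using Mcol coupling_carrier i
    by (intro col_eq_smult_unit_vec[OF DMc i(2,1)]) (simp add: index_diag_mat_mult)
  then have colDM: "col (diag_mat n f * ?M) i = (f i * ?c) \<cdot>\<^sub>v unit_vec n i"
    using coupling_carrier i by (simp add: index_diag_mat_mult)
  have "col (?M * diag_mat r s) i = (?M * diag_mat r s) $$ (i,i) \<cdot>\<^sub>v unit_vec n i"
    using Mcol coupling_carrier i
    by (intro col_eq_smult_unit_vec[OF MDc i(2,1)]) (simp add: index_mult_diag_mat)
  then have colMD: "col (?M * diag_mat r s) i = (f i * ?c) \<cdot>\<^sub>v unit_vec n i"
    using coupling_carrier i si by (simp add: index_mult_diag_mat mult.commute)
  have "f i \<cdot>\<^sub>v col W i = col (U * (diag_mat n f * ?M)) i"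
    using col_mult_diag_mat[OF W i(2), of s] mult_coupling si by simp
  also have "\<dots> = f i \<cdot>\<^sub>v (?c \<cdot>\<^sub>v col U i)"
    unfolding col_mult2[OF U DMc i(2)] colDM mult_mat_vec[OF U unit_vec_carrier] mult_mat_vec_unit_vec[OF U i(1)]
    by (simp only: smult_smult_assoc)
  finally have "f i \<cdot>\<^sub>v col W i = f i \<cdot>\<^sub>v (?c \<cdot>\<^sub>v col U i)" .
  moreover have "f i \<cdot>\<^sub>v col Z i = col (V * (?M * diag_mat r s)) i"
    using col_mult_diag_mat[OF Z i(2), of s] orthonormal_factorizations.mult_coupling[OF transpose]
      orthonormal_factorizations.diag_mult_coupling[OF transpose] si by simp
  moreover have "\<dots> = f i \<cdot>\<^sub>v (?c \<cdot>\<^sub>v col V i)"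
    unfolding col_mult2[OF V MDc i(2)] colMD mult_mat_vec[OF V unit_vec_carrier] mult_mat_vec_unit_vec[OF V i(1)]
    by (simp only: smult_smult_assoc)
  ultimately show ?thesis using smult_vec_cancel[OF fi] by metis
qed

end

lemma is_svdE:
  assumes "is_svd G W S Z" and "G \<in> carrier_mat p q"
  obtains r s where "W \<in> carrier_mat p r" "Z \<in> carrier_mat q r"
    "W\<^sup>T * W = 1\<^sub>m r" "Z\<^sup>T * Z = 1\<^sub>m r" "S = diag_mat r s"
    "\<forall>i<r. 0 \<le> s i" "\<forall>i j. i \<le> j \<and> j < r \<longrightarrow> s j \<le> s i" "G = W * diag_mat r s * Z\<^sup>T"
proof -
  obtain r where r: "W \<in> carrier_mat p r" "Z \<in> carrier_mat q r" "S \<in> carrier_mat r r"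
    "W\<^sup>T * W = 1\<^sub>m r" "Z\<^sup>T * Z = 1\<^sub>m r" "\<forall>i<r. \<forall>j<r. i \<noteq> j \<longrightarrow> S $$ (i,j) = 0"
    "\<forall>i<r. 0 \<le> S $$ (i,i)" "\<forall>i j. i \<le> j \<and> j < r \<longrightarrow> S $$ (j,j) \<le> S $$ (i,i)" "G = W * S * Z\<^sup>T"
    using assms unfolding is_svd_def by auto
  have "S = diag_mat r (\<lambda>i. S $$ (i,i))"
    using r(3,6) by (auto intro!: eq_matI simp: index_diag_mat)
  with r show thesis by (intro that[of r "\<lambda>i. S $$ (i,i)"]) auto
qed

lemma svd_dominant_columns_unique:
  fixes G U V W S Z :: "real mat" and f :: "nat \<Rightarrow> real"
  assumes U: "U \<in> carrier_mat p n" and V: "V \<in> carrier_mat q n"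
    and UU: "U\<^sup>T * U = 1\<^sub>m n" and VV: "V\<^sup>T * V = 1\<^sub>m n"
    and f0: "\<forall>i<n. 0 \<le> f i" and fmono: "\<forall>i j. i \<le> j \<and> j < n \<longrightarrow> f j \<le> f i"
    and fgap: "\<forall>i<k. f (i+1) < f i" and kn: "k < n"
    and G: "G = U * diag_mat n f * V\<^sup>T"
    and svd: "is_svd G W S Z" and kW: "k \<le> dim_col W"
  shows "\<exists>c. \<forall>j<k. \<bar>c j\<bar> = 1 \<and> col W j = c j \<cdot>\<^sub>v col U j \<and> col Z j = c j \<cdot>\<^sub>v col V j"
proof -
  have "G \<in> carrier_mat p q" using U V G by auto
  then obtain r s where W: "W \<in> carrier_mat p r" and Z: "Z \<in> carrier_mat q r"
    and WW: "W\<^sup>T * W = 1\<^sub>m r" and ZZ: "Z\<^sup>T * Z = 1\<^sub>m r"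
    and s0: "\<forall>i<r. 0 \<le> s i" and smono: "\<forall>i j. i \<le> j \<and> j < r \<longrightarrow> s j \<le> s i"
    and GS: "G = W * diag_mat r s * Z\<^sup>T"
    by (rule is_svdE[OF svd])
  interpret orthonormal_factorizations U V W Z f s p q n r
    using U V W Z UU VV WW ZZ G GS by unfold_locales simp_all
  have kr: "k \<le> r" using kW W by simp
  have match: "s i = f i \<and> (\<forall>a<n. (V\<^sup>T * Z) $$ (a,i) \<noteq> 0 \<longrightarrow> a = i) \<and> \<bar>(V\<^sup>T * Z) $$ (i,i)\<bar> = 1"
    if "i < k" for i
    using diagonal_matching_columns[OF f0 fmono fgap kn kr smono coupling_support[OF f0 s0]
        coupling_unit_rows coupling_orthonormal_cols that] .
  have "f i \<noteq> 0" if "i < k" for i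
    using antitone_gap_separates[OF fmono fgap that, of k] f0 kn that by fastforce
  then have "col W i = (V\<^sup>T * Z) $$ (i,i) \<cdot>\<^sub>v col U i \<and> col Z i = (V\<^sup>T * Z) $$ (i,i) \<cdot>\<^sub>v col V i"
    if "i < k" for i
    using columns_from_coupling[of i] match[OF that] that kn kr by auto
  with match show ?thesis by (intro exI[of _ "\<lambda>i. (V\<^sup>T * Z) $$ (i,i)"]) simp
qed

lemma DEIM_dominant_sing_vecs:
  fixes G U V :: "real mat" and f :: "nat \<Rightarrow> real"
  assumes U: "U \<in> carrier_mat p n" and V: "V \<in> carrier_mat q n"
    and UU: "U\<^sup>T * U = 1\<^sub>m n" and VV: "V\<^sup>T * V = 1\<^sub>m n"
    and f0: "\<forall>i<n. 0 \<le> f i" and fmono: "\<forall>i j. i \<le> j \<and> j < n \<longrightarrow> f j \<le> f i"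
    and fgap: "\<forall>i<k. f (i+1) < f i" and kn: "k < n"
    and G: "G = U * diag_mat n f * V\<^sup>T"
    and dom: "dominant_sing_vecs G k Wk Zk"
  shows "DEIM Wk = DEIM (first_cols U k) \<and> DEIM Zk = DEIM (first_cols V k)"
proof -
  obtain W S Z where svd: "is_svd G W S Z" and kW: "k \<le> dim_col W"
    and Wk: "Wk = first_cols W k" and Zk: "Zk = first_cols Z k"
    using dom unfolding dominant_sing_vecs_def by blast
  obtain r where W: "W \<in> carrier_mat p r" and Z: "Z \<in> carrier_mat q r"
    using svd U V G unfolding is_svd_def by auto
  obtain c where c: "\<And>j. j < k \<Longrightarrow> \<bar>c j\<bar> = 1 \<and> col W j = c j \<cdot>\<^sub>v col U j \<and> col Z j = c j \<cdot>\<^sub>v col V j"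
    using svd_dominant_columns_unique[OF U V UU VV f0 fmono fgap kn G svd kW] by blast
  have kr: "k \<le> r" and kn': "k \<le> n" using kW W kn by auto
  have c0: "\<forall>j<k. c j \<noteq> 0" using c by fastforce
  have "Wk = first_cols U k * diag_mat k c"
    unfolding Wk using first_cols_eq_mult_diag_mat[OF U W kn' kr] c by blast
  moreover have "Zk = first_cols V k * diag_mat k c"
    unfolding Zk using first_cols_eq_mult_diag_mat[OF V Z kn' kr] c by blast
  ultimately show ?thesis
    using DEIM_mult_diag_mat[OF first_cols_carrier c0] by simp
qed

lemma (in vec_space) non_distinct_cols_rank_lt:
  assumes A: "A \<in> carrier_mat n nc" and "\<not> distinct (cols A)"
  shows "rank A < nc"
proof -
  obtain S where S: "maximal S (\<lambda>T. T \<subseteq> set (cols A) \<and> lin_indpt T)"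
    using maximal_exists[of "\<lambda>T. T \<subseteq> set (cols A) \<and> lin_indpt T" "card (set (cols A))" "{}"]
    by (meson List.finite_set card_mono empty_iff empty_subsetI finite_lin_indpt2 rev_finite_subset)
  then have "card S \<le> card (set (cols A))" by (simp add: card_mono maximal_def)
  also have "\<dots> < nc"
    using A assms(2) card_distinct[of "cols A"] card_length[of "cols A"] by fastforce
  finally show ?thesis using rank_card_indpt[OF A S] by simp
qed

lemma (in vec_space) rank_lt_of_kernel:
  assumes A: "A \<in> carrier_mat n nc" and v: "v \<in> carrier_vec nc" "v \<noteq> 0\<^sub>v nc" "A *\<^sub>v v = 0\<^sub>v n"
  shows "rank A < nc"
proof (cases "distinct (cols A)")
  case True
  have "lin_dep (set (cols A))" by (rule lin_depI[OF A v True])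
  then have "rank A \<noteq> nc" using full_rank_lin_indpt[OF A _ True] by blast
  then show ?thesis using rank_le_nc[OF A] by simp
qed (rule non_distinct_cols_rank_lt[OF A])

lemma penrose_mult_right_unique:
  fixes M X X' :: "real mat"
  assumes M: "M \<in> carrier_mat a b" and X: "X \<in> carrier_mat b a" and X': "X' \<in> carrier_mat b a"
    and MXM: "M * X * M = M" and MX'M: "M * X' * M = M"
    and symX: "(M * X)\<^sup>T = M * X" and symX': "(M * X')\<^sup>T = M * X'"
  shows "M * X = M * X'"
proof -
  have "M * X = X\<^sup>T * M\<^sup>T" using symX M X by (simp add: transpose_mult_dims)
  also have "\<dots> = X\<^sup>T * (M * X' * M)\<^sup>T" using MX'M by simp
  also have "\<dots> = (M * X)\<^sup>T * (M * X')\<^sup>T"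
    using M X X' by (simp add: transpose_mult_dims assoc_mult_mat_dims)
  also have "\<dots> = M * X * M * X'" using symX symX' M X X' by (simp add: assoc_mult_mat_dims)
  also have "\<dots> = M * X'" using MXM by simp
  finally show ?thesis .
qed

lemma penrose_mult_left_unique:
  fixes M X X' :: "real mat"
  assumes M: "M \<in> carrier_mat a b" and X: "X \<in> carrier_mat b a" and X': "X' \<in> carrier_mat b a"
    and MXM: "M * X * M = M" and MX'M: "M * X' * M = M"
    and symX: "(X * M)\<^sup>T = X * M" and symX': "(X' * M)\<^sup>T = X' * M"
  shows "X * M = X' * M"
proof -
  have "X * M = M\<^sup>T * X\<^sup>T" using symX M X by (simp add: transpose_mult_dims)
  also have "\<dots> = (M * X' * M)\<^sup>T * X\<^sup>T" using MX'M by simp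
  also have "\<dots> = (X' * M)\<^sup>T * (X * M)\<^sup>T"
    using M X X' by (simp add: transpose_mult_dims assoc_mult_mat_dims)
  also have "\<dots> = X' * (M * X * M)" using symX symX' M X X' by (simp add: assoc_mult_mat_dims)
  also have "\<dots> = X' * M" using MXM by simp
  finally show ?thesis .
qed

lemma pinv_eqI:
  fixes M X :: "real mat"
  assumes M: "M \<in> carrier_mat a b" and X: "X \<in> carrier_mat b a"
    and MXM: "M * X * M = M" and XMX: "X * M * X = X"
    and symMX: "(M * X)\<^sup>T = M * X" and symXM: "(X * M)\<^sup>T = X * M"
  shows "pinv M = X"
  unfolding pinv_def
proof (rule the_equality)
  fix X' assume "X' \<in> carrier_mat (dim_col M) (dim_row M) \<and> M * X' * M = M \<and> X' * M * X' = X' \<and>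
      (M * X')\<^sup>T = M * X' \<and> (X' * M)\<^sup>T = X' * M"
  then have X': "X' \<in> carrier_mat b a" and MX'M: "M * X' * M = M" and X'MX': "X' * M * X' = X'"
    and symMX': "(M * X')\<^sup>T = M * X'" and symX'M: "(X' * M)\<^sup>T = X' * M"
    using M by auto
  have "X' = X' * M * X'" using X'MX' by simp
  also have "\<dots> = X * M * X'"
    using penrose_mult_left_unique[OF M X X' MXM MX'M symXM symX'M] by simp
  also have "\<dots> = X * (M * X)"
    using penrose_mult_right_unique[OF M X X' MXM MX'M symMX symMX'] M X X' by (simp add: assoc_mult_mat_dims)
  also have "\<dots> = X" using XMX M X by (simp add: assoc_mult_mat_dims)
  finally show "X' = X" .
qed (use assms in auto)

lemma pinv_eq_left_inverse:
  fixes M X :: "real mat"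
  assumes M: "M \<in> carrier_mat a b" and X: "X \<in> carrier_mat b a"
    and XM: "X * M = 1\<^sub>m b" and symMX: "(M * X)\<^sup>T = M * X"
  shows "pinv M = X"
proof (rule pinv_eqI[OF M X _ _ symMX])
  show "M * X * M = M" using M X XM by (simp add: assoc_mult_mat_dims)
  show "X * M * X = X" using X XM by simp
  show "(X * M)\<^sup>T = X * M" using XM by simp
qed

lemma is_reduced_gsvdD:
  assumes gsvd: "is_reduced_gsvd A B U V Y gam sig"
    and A: "A \<in> carrier_mat m n" and B: "B \<in> carrier_mat d n"
  shows "U \<in> carrier_mat m n" "V \<in> carrier_mat d n" "Y \<in> carrier_mat n n"
    "U\<^sup>T * U = 1\<^sub>m n" "V\<^sup>T * V = 1\<^sub>m n" "invertible_mat Y"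
    "\<forall>i<n. 0 \<le> gam i \<and> 0 \<le> sig i"
    "\<forall>i. i + 1 < n \<longrightarrow> gam (i+1) * sig i \<le> gam i * sig (i+1)"
    "A = U * diag_mat n gam * Y\<^sup>T" "B = V * diag_mat n sig * Y\<^sup>T"
  using assms unfolding is_reduced_gsvd_def Let_def by auto

lemma invertible_matE:
  assumes "invertible_mat (Y :: 'a :: semiring_1 mat)" and "Y \<in> carrier_mat n n"
  obtains Yi where "Yi \<in> carrier_mat n n" "Y * Yi = 1\<^sub>m n" "Yi * Y = 1\<^sub>m n"
proof -
  obtain Yi where YYi: "Y * Yi = 1\<^sub>m n" and YiY: "Yi * Y = 1\<^sub>m (dim_row Yi)"
    using assms unfolding invertible_mat_def inverts_mat_def by auto
  have "dim_row Yi = n" "dim_col Yi = n"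
    using arg_cong[OF YiY, of dim_col] arg_cong[OF YYi, of dim_col] assms(2) by auto
  then show thesis using that YYi YiY by auto
qed

lemma gsvd_sig_pos:
  assumes gsvd: "is_reduced_gsvd A B U V Y gam sig"
    and A: "A \<in> carrier_mat m n" and B: "B \<in> carrier_mat d n"
    and rankB: "vec_space.rank d B = n" and i: "i < n"
  shows "0 < sig i"
proof (rule ccontr)
  note G = is_reduced_gsvdD[OF gsvd A B]
  assume "\<not> 0 < sig i"
  then have sig0: "sig i = 0" using G(7) i by force
  obtain Yi where Yi: "Yi \<in> carrier_mat n n" and YiY: "Yi * Y = 1\<^sub>m n"
    using invertible_matE[OF G(6,3)] by blast
  have YtYit: "Y\<^sup>T * Yi\<^sup>T = 1\<^sub>m n"
    using arg_cong[OF YiY, of transpose_mat] G(3) Yi by (simp add: transpose_mult_dims)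
  define v where "v = Yi\<^sup>T *\<^sub>v unit_vec n i"
  have v: "v \<in> carrier_vec n" using Yi by (simp add: v_def)
  have Ytv: "Y\<^sup>T *\<^sub>v v = unit_vec n i"
    using Yi G(3) YtYit by (simp add: v_def flip: assoc_mult_mat_vec)
  have "v \<noteq> 0\<^sub>v n"
  proof
    assume "v = 0\<^sub>v n"
    then have "Y\<^sup>T *\<^sub>v v = 0\<^sub>v n" using G(3) by auto
    with Ytv unit_vec_nonzero[OF i] show False by metis
  qed
  moreover have "B *\<^sub>v v = 0\<^sub>v d"
  proof -
    have "B *\<^sub>v v = (V * diag_mat n sig) *\<^sub>v unit_vec n i"
      using G(2,3,10) v Ytv by (simp add: assoc_mult_mat_vec[of _ d n _ n])
    also have "\<dots> = sig i \<cdot>\<^sub>v col V i"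
      using G(2) i by (simp add: mult_mat_vec_unit_vec[of _ d n] col_mult_diag_mat)
    finally show ?thesis using sig0 G(2) by auto
  qed
  ultimately have "vec_space.rank d B < n" using vec_space.rank_lt_of_kernel[OF B v] by blast
  with rankB show False by simp
qed

lemma gsvd_mult_pinv:
  assumes gsvd: "is_reduced_gsvd A B U V Y gam sig"
    and A: "A \<in> carrier_mat m n" and B: "B \<in> carrier_mat d n" and sig: "\<forall>i<n. 0 < sig i"
  shows "A * pinv B = U * diag_mat n (\<lambda>i. gam i / sig i) * V\<^sup>T"
proof -
  note G = is_reduced_gsvdD[OF gsvd A B]
  obtain Yi where Yi: "Yi \<in> carrier_mat n n" and YYi: "Y * Yi = 1\<^sub>m n" and YiY: "Yi * Y = 1\<^sub>m n"
    using invertible_matE[OF G(6,3)] by blast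
  have YtYit: "Y\<^sup>T * Yi\<^sup>T = 1\<^sub>m n" and YitYt: "Yi\<^sup>T * Y\<^sup>T = 1\<^sub>m n"
    using arg_cong[OF YiY, of transpose_mat] arg_cong[OF YYi, of transpose_mat] G(3) Yi
    by (simp_all add: transpose_mult_dims)
  define Si where "Si = diag_mat n (\<lambda>i. 1 / sig i)"
  have sig0: "\<forall>i<n. sig i \<noteq> 0" using sig by force
  have SSi: "diag_mat n sig * Si = 1\<^sub>m n" and SiS: "Si * diag_mat n sig = 1\<^sub>m n"
    unfolding Si_def using diag_mat_mult_inverse[OF sig0] by auto
  define X where "X = Yi\<^sup>T * Si * V\<^sup>T"
  have dims: "dim_row Yi = n" "dim_col Yi = n" "dim_row Si = n" "dim_col Si = n"
    "dim_row V = d" "dim_col V = n" "dim_row Y = n" "dim_col Y = n" "dim_row U = m" "dim_col U = n"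
    using Yi G(1-3) by (auto simp: Si_def)
  have X: "X \<in> carrier_mat n d" using dims by (auto simp: X_def)
  have "X * B = 1\<^sub>m n"
    unfolding X_def G(10)
    by (simp add: dims assoc_mult_mat_dims mult_left_inverse_cancel[OF G(5)] mult_left_inverse_cancel[OF SiS] YitYt)
  moreover have "B * X = V * V\<^sup>T"
    unfolding X_def G(10)
    by (simp add: dims assoc_mult_mat_dims mult_left_inverse_cancel[OF YtYit] mult_left_inverse_cancel[OF SSi])
  then have "(B * X)\<^sup>T = B * X" using dims by (simp add: transpose_mult_dims)
  ultimately have "pinv B = X" using pinv_eq_left_inverse[OF B X] by blast
  moreover have "diag_mat n gam * (Si * V\<^sup>T) = diag_mat n (\<lambda>i. gam i / sig i) * V\<^sup>T"
    by (subst assoc_mult_mat_dims[symmetric]) (simp_all add: dims Si_def diag_mat_mult_diag_mat)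
  ultimately show ?thesis
    unfolding X_def G(9)
    by (simp add: dims assoc_mult_mat_dims mult_left_inverse_cancel[OF YtYit])
qed

lemma gsvd_quotients_antitone:
  assumes gsvd: "is_reduced_gsvd A B U V Y gam sig"
    and A: "A \<in> carrier_mat m n" and B: "B \<in> carrier_mat d n" and sig: "\<forall>i<n. 0 < sig i"
  shows "\<forall>i j. i \<le> j \<and> j < n \<longrightarrow> gam j / sig j \<le> gam i / sig i"
proof (rule antitone_from_adjacent)
  fix i assume i: "i + 1 < n"
  then have "0 < sig i" "0 < sig (i+1)" using sig by auto
  then show "gam (i+1) / sig (i+1) \<le> gam i / sig i"
    using is_reduced_gsvdD(8)[OF gsvd A B] i by (simp add: divide_simps mult.commute)
qed

lemma gsvd_is_svd:
  assumes gsvd: "is_reduced_gsvd A B U V Y gam sig"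
    and A: "A \<in> carrier_mat m n" and B: "B \<in> carrier_mat d n" and sig: "\<forall>i<n. 0 < sig i"
  shows "is_svd (A * pinv B) U (diag_mat n (\<lambda>i. gam i / sig i)) V"
  unfolding is_svd_def
proof (intro exI[of _ n] conjI)
  note G = is_reduced_gsvdD[OF gsvd A B]
  show "A * pinv B = U * diag_mat n (\<lambda>i. gam i / sig i) * V\<^sup>T"
    by (rule gsvd_mult_pinv[OF gsvd A B sig])
  then show "U \<in> carrier_mat (dim_row (A * pinv B)) n" "V \<in> carrier_mat (dim_col (A * pinv B)) n"
    using G(1,2) by auto
  show "\<forall>i<n. 0 \<le> diag_mat n (\<lambda>i. gam i / sig i) $$ (i, i)"
    using G(7) sig by (simp add: index_diag_mat)
  show "\<forall>i j. i \<le> j \<and> j < n \<longrightarrow>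
      diag_mat n (\<lambda>i. gam i / sig i) $$ (j, j) \<le> diag_mat n (\<lambda>i. gam i / sig i) $$ (i, i)"
    using gsvd_quotients_antitone[OF gsvd A B sig] by (simp add: index_diag_mat)
qed (use is_reduced_gsvdD(4,5)[OF gsvd A B] in \<open>auto simp: index_diag_mat\<close>)

lemma pinv_one_mat: "pinv (1\<^sub>m n) = 1\<^sub>m n"
  by (rule pinv_eq_left_inverse) auto

lemma gsvd_identity_B:
  assumes gsvd: "is_reduced_gsvd A (1\<^sub>m n) U V Y gam sig"
    and A: "A \<in> carrier_mat m n" and sig: "\<forall>i<n. 0 < sig i"
  shows "Y = V * diag_mat n (\<lambda>i. 1 / sig i)"
proof -
  note G = is_reduced_gsvdD[OF gsvd A one_carrier_mat]
  have sig0: "\<forall>i<n. sig i \<noteq> 0" using sig by force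
  have "V\<^sup>T = V\<^sup>T * 1\<^sub>m n" using G(2) by simp
  also have "\<dots> = diag_mat n sig * Y\<^sup>T"
    using G(2,3) by (subst G(10)) (simp add: assoc_mult_mat_dims mult_left_inverse_cancel[OF G(5)])
  finally have "diag_mat n (\<lambda>i. 1 / sig i) * V\<^sup>T = Y\<^sup>T"
    using G(3) by (simp add: mult_left_inverse_cancel[OF diag_mat_mult_inverse(2)[OF sig0]])
  then have "(diag_mat n (\<lambda>i. 1 / sig i) * V\<^sup>T)\<^sup>T = Y"
    by simp
  then show ?thesis using G(2) by (simp add: transpose_mult_dims)
qed

theorem mainTheorem2:
  fixes A B U V Y :: "real mat" and gam sig :: "nat \<Rightarrow> real" and m n d k :: nat
  assumes A: "A \<in> carrier_mat m n" and B: "B \<in> carrier_mat d n"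
    and mn: "m \<ge> n" and dn: "d \<ge> n"
    and rankB: "vec_space.rank d B = n"
    and gsvd: "is_reduced_gsvd A B U V Y gam sig"
    and k: "1 \<le> k" "k < n"
    and gap: "\<forall>i<k. gam (i+1) * sig i < gam i * sig (i+1)"
  shows
   "(\<forall>i<n. sig i > 0) \<and>
    is_svd (A * pinv B) U (diag_mat n (\<lambda>i. gam i / sig i)) V \<and>
    (\<forall>Wk Zk. dominant_sing_vecs (A * pinv B) k Wk Zk \<longrightarrow>
        DEIM Wk = DEIM (first_cols U k) \<and> DEIM Zk = DEIM (first_cols V k)) \<and>
    (d = n \<and> B = 1\<^sub>m n \<longrightarrow>
      (\<forall>Wk Zk. dominant_sing_vecs A k Wk Zk \<longrightarrow>
        DEIM Wk = DEIM (first_cols U k) \<and> DEIM Zk = DEIM (first_cols Y k) \<and>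
        A * sel_mat n (DEIM (first_cols Y k)) = A * sel_mat n (DEIM Zk) \<and>
        (sel_mat m (DEIM (first_cols U k)))\<^sup>T * A = (sel_mat m (DEIM Wk))\<^sup>T * A))"
proof -
  note G = is_reduced_gsvdD[OF gsvd A B]
  have sig: "\<forall>i<n. 0 < sig i" using gsvd_sig_pos[OF gsvd A B rankB] by blast
  have quot0: "\<forall>i<n. 0 \<le> gam i / sig i" using G(7) by simp
  have quot_gap: "\<forall>i<k. gam (i+1) / sig (i+1) < gam i / sig i"
    using gap sig k(2) by (auto simp: divide_simps mult.commute)
  have dom: "DEIM Wk = DEIM (first_cols U k) \<and> DEIM Zk = DEIM (first_cols V k)"
    if "dominant_sing_vecs (A * pinv B) k Wk Zk" for Wk Zk
    using DEIM_dominant_sing_vecs[where f = "\<lambda>i. gam i / sig i", OF G(1,2,4,5) quot0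
        gsvd_quotients_antitone[OF gsvd A B sig] quot_gap k(2) gsvd_mult_pinv[OF gsvd A B sig] that] .
  have identity_B: "DEIM (first_cols Y k) = DEIM (first_cols V k) \<and> A * pinv B = A" if "d = n" "B = 1\<^sub>m n"
  proof -
    have "first_cols Y k = first_cols V k * diag_mat k (\<lambda>i. 1 / sig i)"
      using gsvd_identity_B[OF gsvd[unfolded that] A sig] G(2) k(2) that(1)
      by (simp add: first_cols_mult_diag_mat)
    moreover have "\<forall>j<k. 1 / sig j \<noteq> 0"
      using sig k(2) by (metis less_trans order_less_irrefl zero_eq_1_divide_iff)
    ultimately show ?thesis
      using DEIM_mult_diag_mat[OF first_cols_carrier] A that(2) by (simp add: pinv_one_mat)
  qed
  show ?thesis using sig gsvd_is_svd[OF gsvd A B sig] dom identity_B by auto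
qed

end
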